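(* Let $G=(V,E)$ be a graph on $n\geq 2d+1$ vertices with minimum degree $\delta(G)=d$. Suppose that $\deg(u)+\deg(v)\geq n+d-2$ for all pairs of distinct non-adjacent vertices $u,v$ of $G$. Then $G$ is rigid in $\mathbb{R}^d$.
   Context: A graph is rigid in $\mathbb{R}^d$ if some (equivalently every) generic $d$-dimensional bar-and-joint framework of it (vertex positions with coordinates algebraically independent over $\mathbb{Q}$) admits no continuous edge-length-preserving motion changing some pairwise distance between vertices. *)

theory Defs
  imports "HOL-Analysis.Analysis"
begin

definition simple_graph :: "'a set \<Rightarrow> 'a set set \<Rightarrow> bool" where
  "simple_graph V E \<longleftrightarrow> finite V \<and>
     (\<forall>e\<in>E. \<exists>u v. u \<in> V \<and> v \<in> V \<and> u \<noteq> v \<and> e = {u, v})"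

definition degree :: "'a set \<Rightarrow> 'a set set \<Rightarrow> 'a \<Rightarrow> nat" where
  "degree V E v = card {u \<in> V. {u, v} \<in> E}"

definition min_degree :: "'a set \<Rightarrow> 'a set set \<Rightarrow> nat" where
  "min_degree V E = Min (degree V E ` V)"

definition alg_indep_Q :: "'i set \<Rightarrow> ('i \<Rightarrow> real) \<Rightarrow> bool" where
  "alg_indep_Q I x \<longleftrightarrow>
     (\<forall>(M :: ('i \<Rightarrow> nat) set) (c :: ('i \<Rightarrow> nat) \<Rightarrow> rat).
        finite M \<and> M \<subseteq> {m. \<forall>i. i \<notin> I \<longrightarrow> m i = 0} \<and>
        (\<Sum>m\<in>M. real_of_rat (c m) * (\<Prod>i\<in>I. x i ^ m i)) = 0
        \<longrightarrow> (\<forall>m\<in>M. c m = 0))"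

text \<open>A d-dimensional framework: p v k is the k-th coordinate (k < d) of vertex v.\<close>
definition generic :: "'a set \<Rightarrow> nat \<Rightarrow> ('a \<Rightarrow> nat \<Rightarrow> real) \<Rightarrow> bool" where
  "generic V d p \<longleftrightarrow> alg_indep_Q (V \<times> {..<d}) (\<lambda>(v, k). p v k)"

definition sqdist :: "nat \<Rightarrow> ('a \<Rightarrow> nat \<Rightarrow> real) \<Rightarrow> 'a \<Rightarrow> 'a \<Rightarrow> real" where
  "sqdist d p u v = (\<Sum>k<d. (p u k - p v k)^2)"

definition flexible :: "'a set \<Rightarrow> 'a set set \<Rightarrow> nat \<Rightarrow> ('a \<Rightarrow> nat \<Rightarrow> real) \<Rightarrow> bool" where
  "flexible V E d p \<longleftrightarrow>
     (\<exists>x :: real \<Rightarrow> 'a \<Rightarrow> nat \<Rightarrow> real.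
        (\<forall>v\<in>V. \<forall>k<d. continuous_on {0..1} (\<lambda>t. x t v k)) \<and>
        (\<forall>v\<in>V. \<forall>k<d. x 0 v k = p v k) \<and>
        (\<forall>t\<in>{0..1}. \<forall>u v. {u, v} \<in> E \<longrightarrow> sqdist d (x t) u v = sqdist d p u v) \<and>
        (\<exists>t\<in>{0..1}. \<exists>u\<in>V. \<exists>v\<in>V. sqdist d (x t) u v \<noteq> sqdist d p u v))"

definition rigid :: "'a set \<Rightarrow> 'a set set \<Rightarrow> nat \<Rightarrow> bool" where
  "rigid V E d \<longleftrightarrow> (\<forall>p. generic V d p \<longrightarrow> \<not> flexible V E d p)"

end

theory Submission
  imports Defs "Jordan_Normal_Form.Determinant"
begin

(* Let u be a vertex of minimum degree d. By the degree condition, every vertex other than u that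
   is not a neighbour of u is adjacent to all vertices except u; there are n - d - 1 >= d of them,
   and we fix a set K of d of them. Along a continuous edge-length-preserving motion of a generic
   framework, distances are therefore preserved inside every clique {a} \<union> K with a \<noteq> u.
   Two such rigid bodies sharing d generic points glue together: relative to the affine hyperplane
   spanned by the shared points, the positions of a and b are determined up to a reflection, so
   |a - b| takes at most two values during the motion and is constant by continuity. Gluing the
   cliques {a} \<union> K makes V - {u} rigid, and gluing V - {u} with u and its d neighbours makes V
   rigid. Genericity is used only to see that the Gram determinant of d framework points, a
   polynomial with rational coefficients in the coordinates, does not vanish. *)

definition rat_polyfun :: "'i set \<Rightarrow> (('i \<Rightarrow> real) \<Rightarrow> real) \<Rightarrow> bool" where
  "rat_polyfun I f \<longleftrightarrow> (\<exists>M c. finite M \<and> M \<subseteq> {m. \<forall>i. i \<notin> I \<longrightarrow> m i = 0} \<and>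
     (\<forall>z. f z = (\<Sum>m\<in>M. real_of_rat (c m) * (\<Prod>i\<in>I. z i ^ m i))))"

lemma rat_polyfun_const: "rat_polyfun I (\<lambda>z. real_of_rat q)"
  unfolding rat_polyfun_def
  by (rule exI[of _ "{\<lambda>_. 0}"], rule exI[of _ "\<lambda>_. q"]) auto

lemma rat_polyfun_var:
  assumes "j \<in> I" "finite I"
  shows "rat_polyfun I (\<lambda>z. z j)"
  unfolding rat_polyfun_def
proof (rule exI[of _ "{\<lambda>i. if i = j then 1 else 0}"], rule exI[of _ "\<lambda>_. 1"], intro conjI allI)
  fix z :: "'a \<Rightarrow> real"
  have "(\<Prod>i\<in>I. z i ^ (if i = j then 1 else 0)) = (\<Prod>i\<in>I. if i = j then z i else 1)"
    by (rule prod.cong) auto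
  also have "\<dots> = z j" using assms by (simp add: prod.delta')
  finally show "z j = (\<Sum>m\<in>{\<lambda>i. if i = j then 1 else 0}. real_of_rat 1 * (\<Prod>i\<in>I. z i ^ m i))"
    by simp
qed (use assms in auto)

lemma rat_polyfun_add:
  assumes "rat_polyfun I f" "rat_polyfun I g"
  shows "rat_polyfun I (\<lambda>z. f z + g z)"
proof -
  obtain M c where M: "finite M" "M \<subseteq> {m. \<forall>i. i \<notin> I \<longrightarrow> m i = 0}"
    "\<And>z. f z = (\<Sum>m\<in>M. real_of_rat (c m) * (\<Prod>i\<in>I. z i ^ m i))"
    using assms(1) unfolding rat_polyfun_def by blast
  obtain M' c' where M': "finite M'" "M' \<subseteq> {m. \<forall>i. i \<notin> I \<longrightarrow> m i = 0}"
    "\<And>z. g z = (\<Sum>m\<in>M'. real_of_rat (c' m) * (\<Prod>i\<in>I. z i ^ m i))"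
    using assms(2) unfolding rat_polyfun_def by blast
  let ?c = "\<lambda>m. (if m \<in> M then c m else 0) + (if m \<in> M' then c' m else 0)"
  show ?thesis unfolding rat_polyfun_def
  proof (rule exI[of _ "M \<union> M'"], rule exI[of _ ?c], intro conjI allI)
    fix z :: "'a \<Rightarrow> real"
    let ?X = "\<lambda>m. (\<Prod>i\<in>I. z i ^ m i)"
    have "(\<Sum>m\<in>M \<union> M'. real_of_rat (?c m) * ?X m) =
       (\<Sum>m\<in>M \<union> M'. (if m \<in> M then real_of_rat (c m) * ?X m else 0)) +
       (\<Sum>m\<in>M \<union> M'. (if m \<in> M' then real_of_rat (c' m) * ?X m else 0))"
      unfolding sum.distrib[symmetric] by (rule sum.cong) (auto simp: of_rat_add distrib_right)
    also have "\<dots> = (\<Sum>m\<in>M. real_of_rat (c m) * ?X m) + (\<Sum>m\<in>M'. real_of_rat (c' m) * ?X m)"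
      using M(1) M'(1) by (simp add: sum.If_cases Int_absorb1 Int_absorb2)
    finally show "f z + g z = (\<Sum>m\<in>M \<union> M'. real_of_rat (?c m) * ?X m)"
      using M(3) M'(3) by simp
  qed (use M M' in auto)
qed

lemma rat_polyfun_mult:
  assumes "rat_polyfun I f" "rat_polyfun I g"
  shows "rat_polyfun I (\<lambda>z. f z * g z)"
proof -
  obtain M c where M: "finite M" "M \<subseteq> {m. \<forall>i. i \<notin> I \<longrightarrow> m i = 0}"
    "\<And>z. f z = (\<Sum>m\<in>M. real_of_rat (c m) * (\<Prod>i\<in>I. z i ^ m i))"
    using assms(1) unfolding rat_polyfun_def by blast
  obtain M' c' where M': "finite M'" "M' \<subseteq> {m. \<forall>i. i \<notin> I \<longrightarrow> m i = 0}"
    "\<And>z. g z = (\<Sum>m\<in>M'. real_of_rat (c' m) * (\<Prod>i\<in>I. z i ^ m i))"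
    using assms(2) unfolding rat_polyfun_def by blast
  define h where "h = (\<lambda>(m::'a\<Rightarrow>nat, m'::'a\<Rightarrow>nat). (\<lambda>i. m i + m' i))"
  define S where "S = M \<times> M'"
  let ?c = "\<lambda>k. (\<Sum>q\<in>{q \<in> S. h q = k}. c (fst q) * c' (snd q))"
  have finS: "finite S" using M(1) M'(1) S_def by simp
  show ?thesis unfolding rat_polyfun_def
  proof (rule exI[of _ "h ` S"], rule exI[of _ ?c], intro conjI allI)
    fix z :: "'a \<Rightarrow> real"
    let ?X = "\<lambda>m. (\<Prod>i\<in>I. z i ^ m i)"
    have "f z * g z = (\<Sum>m\<in>M. \<Sum>m'\<in>M'. real_of_rat (c m) * real_of_rat (c' m') * (?X m * ?X m'))"
      unfolding M(3) M'(3) sum_product by (simp add: algebra_simps)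
    also have "\<dots> = (\<Sum>q\<in>S. real_of_rat (c (fst q) * c' (snd q)) * ?X (h q))"
      unfolding S_def sum.cartesian_product
      by (rule sum.cong) (auto simp: h_def of_rat_mult power_add prod.distrib split: prod.splits)
    also have "\<dots> = (\<Sum>k\<in>h ` S. \<Sum>q\<in>{q \<in> S. h q = k}. real_of_rat (c (fst q) * c' (snd q)) * ?X (h q))"
      by (rule sum.image_gen[OF finS])
    also have "\<dots> = (\<Sum>k\<in>h ` S. real_of_rat (?c k) * ?X k)"
      by (rule sum.cong) (auto simp: of_rat_sum sum_distrib_right)
    finally show "f z * g z = (\<Sum>k\<in>h ` S. real_of_rat (?c k) * ?X k)" .
  next
    show "finite (h ` S)" using finS by simp
  next
    show "h ` S \<subseteq> {m. \<forall>i. i \<notin> I \<longrightarrow> m i = 0}"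
    proof
      fix k assume "k \<in> h ` S"
      then obtain m m' where "m \<in> M" "m' \<in> M'" "k = (\<lambda>i. m i + m' i)"
        unfolding S_def h_def by auto
      then show "k \<in> {m. \<forall>i. i \<notin> I \<longrightarrow> m i = 0}" using M(2) M'(2) by auto
    qed
  qed
qed

lemma rat_polyfun_diff:
  assumes "rat_polyfun I f" "rat_polyfun I g"
  shows "rat_polyfun I (\<lambda>z. f z - g z)"
proof -
  have "rat_polyfun I (\<lambda>z. f z + real_of_rat (-1) * g z)"
    by (intro rat_polyfun_add rat_polyfun_mult rat_polyfun_const assms)
  then show ?thesis by simp
qed

lemma rat_polyfun_sum:
  assumes "finite S" "\<And>s. s \<in> S \<Longrightarrow> rat_polyfun I (f s)"
  shows "rat_polyfun I (\<lambda>z. \<Sum>s\<in>S. f s z)"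
  using assms
proof (induction S rule: finite_induct)
  case empty
  then show ?case using rat_polyfun_const[of I 0] by simp
next
  case (insert x F)
  then show ?case by (simp add: rat_polyfun_add)
qed

lemma rat_polyfun_prod:
  assumes "finite S" "\<And>s. s \<in> S \<Longrightarrow> rat_polyfun I (f s)"
  shows "rat_polyfun I (\<lambda>z. \<Prod>s\<in>S. f s z)"
  using assms
proof (induction S rule: finite_induct)
  case empty
  then show ?case using rat_polyfun_const[of I 1] by simp
next
  case (insert x F)
  then show ?case by (simp add: rat_polyfun_mult)
qed

lemma rat_polyfun_det:
  assumes "\<And>i j. i < n \<Longrightarrow> j < n \<Longrightarrow> rat_polyfun I (e i j)"
  shows "rat_polyfun I (\<lambda>z. Determinant.det (mat n n (\<lambda>(i,j). e i j z)))"
proof -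
  have "rat_polyfun I (\<lambda>z. \<Sum>p\<in>{p. p permutes {0..<n}}. of_int (sign p) * (\<Prod>i = 0..<n. e i (p i) z))"
  proof (rule rat_polyfun_sum)
    show "finite {p. p permutes {0..<n}}" by (simp add: finite_permutations)
  next
    fix p assume p: "p \<in> {p. p permutes {0..<n}}"
    have c: "rat_polyfun I (\<lambda>z. real_of_rat (of_int (sign p)))" by (rule rat_polyfun_const)
    have "rat_polyfun I (\<lambda>z. \<Prod>i = 0..<n. e i (p i) z)"
    proof (rule rat_polyfun_prod)
      fix i assume "i \<in> {0..<n}"
      then have "i < n" "p i < n" using p permutes_in_image[of p "{0..<n}" i] by auto
      then show "rat_polyfun I (e i (p i))" using assms by simp
    qed simp
    from rat_polyfun_mult[OF c this] show "rat_polyfun I (\<lambda>z. of_int (sign p) * (\<Prod>i = 0..<n. e i (p i) z))"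
      by simp
  qed
  then show ?thesis by (simp add: det_def)
qed

lemma alg_indep_Q_rat_polyfun_zero:
  assumes "alg_indep_Q I x" "rat_polyfun I f" "f x = 0"
  shows "f z = 0"
proof -
  obtain M c where M: "finite M" "M \<subseteq> {m. \<forall>i. i \<notin> I \<longrightarrow> m i = 0}"
    "\<And>z. f z = (\<Sum>m\<in>M. real_of_rat (c m) * (\<Prod>i\<in>I. z i ^ m i))"
    using assms(2) unfolding rat_polyfun_def by blast
  have "(\<Sum>m\<in>M. real_of_rat (c m) * (\<Prod>i\<in>I. x i ^ m i)) = 0" using M(3) assms(3) by simp
  then have "\<forall>m\<in>M. c m = 0"
    using assms(1) M(1,2) unfolding alg_indep_Q_def by (elim allE[of _ M] allE[of _ c]) simp
  then show ?thesis using M(3) by simp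
qed

definition dotp :: "nat \<Rightarrow> (nat \<Rightarrow> real) \<Rightarrow> (nat \<Rightarrow> real) \<Rightarrow> real" where
  "dotp d f g = (\<Sum>k<d. f k * g k)"

definition lincomb :: "nat \<Rightarrow> (nat \<Rightarrow> real) \<Rightarrow> (nat \<Rightarrow> nat \<Rightarrow> real) \<Rightarrow> nat \<Rightarrow> real" where
  "lincomb n c v = (\<lambda>k. \<Sum>i<n. c i * v i k)"

definition gram_mat :: "nat \<Rightarrow> nat \<Rightarrow> (nat \<Rightarrow> nat \<Rightarrow> real) \<Rightarrow> real mat" where
  "gram_mat d n v = mat n n (\<lambda>(i, j). dotp d (v i) (v j))"

lemma dotp_commute: "dotp d f g = dotp d g f"
  unfolding dotp_def by (simp add: mult.commute)

lemma dotp_cong: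
  "(\<And>k. k < d \<Longrightarrow> f k = f' k) \<Longrightarrow> (\<And>k. k < d \<Longrightarrow> g k = g' k) \<Longrightarrow> dotp d f g = dotp d f' g'"
  unfolding dotp_def by (rule sum.cong) auto

lemma dotp_diff_left: "dotp d (\<lambda>k. f k - g k) h = dotp d f h - dotp d g h"
  unfolding dotp_def by (simp add: left_diff_distrib sum_subtractf)

lemma dotp_diff_right: "dotp d f (\<lambda>k. g k - h k) = dotp d f g - dotp d f h"
  unfolding dotp_def by (simp add: right_diff_distrib sum_subtractf)

lemma dotp_lincomb_left: "dotp d (lincomb n c v) f = (\<Sum>i<n. c i * dotp d (v i) f)"
  unfolding dotp_def lincomb_def
  by (simp add: sum_distrib_left sum_distrib_right mult.assoc) (rule sum.swap)

lemma dotp_lincomb_right: "dotp d f (lincomb n c v) = (\<Sum>i<n. c i * dotp d f (v i))"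
  using dotp_lincomb_left[of d n c v f] by (simp add: dotp_commute)

lemma gram_mat_carrier: "gram_mat d n v \<in> carrier_mat n n"
  unfolding gram_mat_def by simp

lemma gram_mat_cong:
  "(\<And>i j. i < n \<Longrightarrow> j < n \<Longrightarrow> dotp d (v i) (v j) = dotp d (u i) (u j)) \<Longrightarrow>
   gram_mat d n v = gram_mat d n u"
  unfolding gram_mat_def by (rule cong_mat) auto

lemma gram_mat_mult_vec:
  "j < n \<Longrightarrow> (gram_mat d n v *\<^sub>v vec n c) $ j = dotp d (v j) (lincomb n c v)"
  unfolding gram_mat_def dotp_lincomb_right
  by (simp add: scalar_prod_def atLeast0LessThan mult.commute)

lemma nonsingular_mat_solvable:
  fixes A :: "'a :: field mat"
  assumes A: "A \<in> carrier_mat n n" and "Determinant.det A \<noteq> 0" and b: "b \<in> carrier_vec n"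
  shows "\<exists>x \<in> carrier_vec n. A *\<^sub>v x = b"
proof -
  have "A \<in> Units (ring_mat TYPE('a) n ())"
    by (rule det_non_zero_imp_unit) fact+
  then obtain B where B: "B \<in> carrier_mat n n" "A * B = 1\<^sub>m n"
    unfolding Units_def ring_mat_simps by auto
  have "A *\<^sub>v (B *\<^sub>v b) = b"
    using A B b by (metis assoc_mult_mat_vec one_mult_mat_vec)
  with B b show ?thesis by auto
qed

lemma gram_lincomb_solvable:
  assumes "Determinant.det (gram_mat d n v) \<noteq> 0"
  shows "\<exists>c. \<forall>j<n. dotp d (v j) (lincomb n c v) = b j"
proof -
  obtain x where x: "x \<in> carrier_vec n" "gram_mat d n v *\<^sub>v x = vec n b"
    using nonsingular_mat_solvable[OF gram_mat_carrier assms, of "vec n b"] by auto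
  have "vec n (\<lambda>i. x $ i) = x"
    using x(1) by (intro eq_vecI) auto
  with x(2) have "\<forall>j<n. dotp d (v j) (lincomb n (\<lambda>i. x $ i) v) = b j"
    by (metis gram_mat_mult_vec index_vec)
  then show ?thesis by blast
qed

lemma gram_lincomb_orthogonal_imp_zero:
  assumes "Determinant.det (gram_mat d n v) \<noteq> 0"
    and "\<forall>j<n. dotp d (v j) (lincomb n c v) = 0"
  shows "\<forall>i<n. c i = 0"
proof -
  have "gram_mat d n v *\<^sub>v vec n c = 0\<^sub>v n"
  proof (rule eq_vecI)
    fix j assume "j < dim_vec (0\<^sub>v n :: real vec)"
    then show "(gram_mat d n v *\<^sub>v vec n c) $ j = 0\<^sub>v n $ j"
      using assms(2) gram_mat_mult_vec[of j n d v c] by simp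
  qed (simp add: gram_mat_def)
  then have "vec n c = 0\<^sub>v n"
    using assms(1) det_0_iff_vec_prod_zero[OF gram_mat_carrier] vec_carrier by blast
  then show ?thesis
    by (metis index_vec index_zero_vec(1))
qed

lemma exists_nontrivial_vanishing_lincomb:
  assumes "d < m"
  shows "\<exists>c. (\<exists>i<m. c i \<noteq> 0) \<and> (\<forall>k<d. lincomb m c v k = 0)"
proof -
  define A where "A = mat\<^sub>r m m (\<lambda>k. if k = m - 1 then 0\<^sub>v m else vec m (\<lambda>i. v i k))"
  have A: "A \<in> carrier_mat m m"
    unfolding A_def by simp
  have "Determinant.det A = 0"
    unfolding A_def using assms by (intro det_row_0) auto
  then obtain w where w: "w \<in> carrier_vec m" "w \<noteq> 0\<^sub>v m" "A *\<^sub>v w = 0\<^sub>v m"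
    using det_0_iff_vec_prod_zero[OF A] by auto
  have "\<exists>i<m. w $ i \<noteq> 0"
    using w(1,2) by (metis eq_vecI carrier_vecD index_zero_vec(1,2))
  moreover have "lincomb m (\<lambda>i. w $ i) v k = 0" if "k < d" for k
  proof -
    have "(A *\<^sub>v w) $ k = 0" "k \<noteq> m - 1"
      using w(3) that assms by simp_all
    then show ?thesis
      unfolding A_def lincomb_def using that assms w(1)
      by (simp add: scalar_prod_def atLeast0LessThan mult.commute)
  qed
  ultimately show ?thesis by blast
qed

lemma dotp_square_eq_if_dependent:
  assumes "a \<noteq> 0 \<or> b \<noteq> 0" and "\<forall>k<d. a * Y k + b * C k = 0"
  shows "(dotp d Y C)\<^sup>2 = dotp d Y Y * dotp d C C"
proof (cases "a = 0")
  case True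
  with assms have "dotp d C C = 0" "dotp d Y C = 0"
    unfolding dotp_def by simp_all
  then show ?thesis by simp
next
  case False
  with assms(2) have "\<forall>k<d. Y k = (- b / a) * C k"
    by (auto simp: field_simps)
  then have "dotp d Y C = (- b / a) * dotp d C C" "dotp d Y Y = (- b / a)\<^sup>2 * dotp d C C"
    unfolding dotp_def by (auto simp: sum_distrib_left power2_eq_square ac_simps intro: sum.cong)
  then show ?thesis
    by (simp add: power2_eq_square)
qed

(* Y and C both lie in the orthogonal complement of n independent vectors in R^(n+1), a line. *)
lemma dotp_square_eq_if_orthogonal:
  assumes "Determinant.det (gram_mat (Suc n) n v) \<noteq> 0"
    and "\<forall>j<n. dotp (Suc n) (v j) Y = 0" and "\<forall>j<n. dotp (Suc n) (v j) C = 0"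
  shows "(dotp (Suc n) Y C)\<^sup>2 = dotp (Suc n) Y Y * dotp (Suc n) C C"
proof -
  define R where "R = (\<lambda>i. if i < n then v i else if i = n then Y else C)"
  obtain w where w: "\<exists>i<Suc (Suc n). w i \<noteq> 0" "\<forall>k<Suc n. lincomb (Suc (Suc n)) w R k = 0"
    using exists_nontrivial_vanishing_lincomb[of "Suc n" "Suc (Suc n)" R] by auto
  have "lincomb (Suc (Suc n)) w R = (\<lambda>k. lincomb n w v k + (w n * Y k + w (Suc n) * C k))"
    unfolding lincomb_def R_def by (simp add: algebra_simps)
  with w(2) have rel: "\<forall>k<Suc n. lincomb n w v k = - (w n * Y k + w (Suc n) * C k)"
    by (metis add_eq_0_iff2)
  have "\<forall>j<n. dotp (Suc n) (v j) (lincomb n w v) = 0"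
  proof (intro allI impI)
    fix j assume "j < n"
    have "dotp (Suc n) (v j) (lincomb n w v) = dotp (Suc n) (v j) (\<lambda>k. - (w n * Y k + w (Suc n) * C k))"
      using rel by (intro dotp_cong) auto
    also have "\<dots> = - (w n * dotp (Suc n) (v j) Y + w (Suc n) * dotp (Suc n) (v j) C)"
      unfolding dotp_def sum_distrib_left sum.distrib[symmetric] sum_negf[symmetric]
      by (rule sum.cong) (simp_all add: algebra_simps)
    finally show "dotp (Suc n) (v j) (lincomb n w v) = 0"
      using assms(2,3) \<open>j < n\<close> by simp
  qed
  then have "\<forall>i<n. w i = 0"
    by (rule gram_lincomb_orthogonal_imp_zero[OF assms(1)])
  then have "w n \<noteq> 0 \<or> w (Suc n) \<noteq> 0" and "\<forall>k<Suc n. w n * Y k + w (Suc n) * C k = 0"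
    using w(1) rel by (auto simp: less_Suc_eq lincomb_def)
  then show ?thesis
    by (rule dotp_square_eq_if_dependent)
qed

lemma dotp_residuals_transfer:
  assumes "\<forall>i<n. \<forall>j<n. dotp d (v i) (v j) = dotp d (u i) (u j)"
    and "\<forall>j<n. dotp d (v j) Y = dotp d (u j) X" and "\<forall>j<n. dotp d (v j) C = dotp d (u j) Z"
  shows "dotp d (\<lambda>k. Y k - lincomb n a v k) (\<lambda>k. C k - lincomb n b v k) - dotp d Y C =
         dotp d (\<lambda>k. X k - lincomb n a u k) (\<lambda>k. Z k - lincomb n b u k) - dotp d X Z"
  using assms
  by (simp add: dotp_diff_left dotp_diff_right dotp_lincomb_left dotp_lincomb_right dotp_commute[of d Y]
      dotp_commute[of d X])

definition same_gram_except_pair ::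
    "nat \<Rightarrow> nat \<Rightarrow> (nat \<Rightarrow> nat \<Rightarrow> real) \<Rightarrow> (nat \<Rightarrow> real) \<Rightarrow> (nat \<Rightarrow> real) \<Rightarrow>
     (nat \<Rightarrow> nat \<Rightarrow> real) \<Rightarrow> (nat \<Rightarrow> real) \<Rightarrow> (nat \<Rightarrow> real) \<Rightarrow> bool" where
  "same_gram_except_pair d n v Y C u X Z \<longleftrightarrow>
     (\<forall>i<n. \<forall>j<n. dotp d (v i) (v j) = dotp d (u i) (u j)) \<and>
     (\<forall>j<n. dotp d (v j) Y = dotp d (u j) X \<and> dotp d (v j) C = dotp d (u j) Z) \<and>
     dotp d Y Y = dotp d X X \<and> dotp d C C = dotp d Z Z"

(* Subtracting from Y and C their projections onto the span of the v j, whose coefficients depend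
   only on the Gram data shared with u, X, Z, leaves two parallel vectors. *)
lemma dotp_quadratic_relation_if_same_gram_except_pair:
  assumes G: "Determinant.det (gram_mat (Suc n) n u) \<noteq> 0"
  shows "\<exists>m P. \<forall>v Y C. same_gram_except_pair (Suc n) n v Y C u X Z \<longrightarrow> (dotp (Suc n) Y C - m)\<^sup>2 = P"
proof -
  let ?d = "Suc n"
  obtain a where a: "\<forall>j<n. dotp ?d (u j) (lincomb n a u) = dotp ?d (u j) X"
    using gram_lincomb_solvable[OF G, of "\<lambda>j. dotp ?d (u j) X"] by blast
  obtain b where b: "\<forall>j<n. dotp ?d (u j) (lincomb n b u) = dotp ?d (u j) Z"
    using gram_lincomb_solvable[OF G, of "\<lambda>j. dotp ?d (u j) Z"] by blast
  define X' where "X' = (\<lambda>k. X k - lincomb n a u k)"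
  define Z' where "Z' = (\<lambda>k. Z k - lincomb n b u k)"
  have "(dotp ?d Y C - (dotp ?d X Z - dotp ?d X' Z'))\<^sup>2 = dotp ?d X' X' * dotp ?d Z' Z'"
    if same: "same_gram_except_pair ?d n v Y C u X Z" for v Y C
  proof -
    define Y' where "Y' = (\<lambda>k. Y k - lincomb n a v k)"
    define C' where "C' = (\<lambda>k. C k - lincomb n b v k)"
    have gram: "\<forall>i<n. \<forall>j<n. dotp ?d (v i) (v j) = dotp ?d (u i) (u j)"
      using same unfolding same_gram_except_pair_def by blast
    then have "Determinant.det (gram_mat ?d n v) \<noteq> 0"
      using G gram_mat_cong[of n ?d v u] by simp
    moreover have "\<forall>j<n. dotp ?d (v j) Y' = 0" "\<forall>j<n. dotp ?d (v j) C' = 0"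
    proof (safe)
      fix j assume "j < n"
      then have lincomb_eq: "dotp ?d (v j) (lincomb n c v) = dotp ?d (u j) (lincomb n c u)" for c
        using gram by (simp add: dotp_lincomb_right)
      show "dotp ?d (v j) Y' = 0"
        using same a \<open>j < n\<close> by (simp add: same_gram_except_pair_def Y'_def dotp_diff_right lincomb_eq)
      show "dotp ?d (v j) C' = 0"
        using same b \<open>j < n\<close> by (simp add: same_gram_except_pair_def C'_def dotp_diff_right lincomb_eq)
    qed
    ultimately have "(dotp ?d Y' C')\<^sup>2 = dotp ?d Y' Y' * dotp ?d C' C'"
      by (rule dotp_square_eq_if_orthogonal)
    moreover have "dotp ?d Y' C' = dotp ?d Y C - (dotp ?d X Z - dotp ?d X' Z')"
      using dotp_residuals_transfer[of n ?d v u Y X C Z a b] same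
      unfolding same_gram_except_pair_def Y'_def C'_def X'_def Z'_def by simp
    moreover have "dotp ?d Y' Y' = dotp ?d X' X'"
      using dotp_residuals_transfer[of n ?d v u Y X Y X a a] same
      unfolding same_gram_except_pair_def Y'_def X'_def by simp
    moreover have "dotp ?d C' C' = dotp ?d Z' Z'"
      using dotp_residuals_transfer[of n ?d v u C Z C Z b b] same
      unfolding same_gram_except_pair_def C'_def Z'_def by simp
    ultimately show ?thesis
      by simp
  qed
  then show ?thesis
    by blast
qed

lemma mem_plus_minus_sqrt_if_power2_eq:
  fixes s m P :: real
  assumes "(s - m)\<^sup>2 = P"
  shows "s \<in> {m + sqrt P, m - sqrt P}"
proof -
  have "sqrt P = \<bar>s - m\<bar>"
    using assms by (metis real_sqrt_abs)
  then show ?thesis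
    by (cases "s \<ge> m") auto
qed

lemma sqdist_self: "sqdist d q a a = 0"
  unfolding sqdist_def by simp

lemma dotp_diff_polarization:
  "dotp d (\<lambda>k. q a k - q c k) (\<lambda>k. q b k - q c k) = (sqdist d q a c + sqdist d q b c - sqdist d q a b) / 2"
  unfolding dotp_def sqdist_def
  by (simp add: sum_divide_distrib[symmetric] sum.distrib[symmetric] sum_subtractf[symmetric] sum_distrib_right)
     (intro sum.cong refl, simp add: power2_eq_square algebra_simps)

lemma generic_gram_det_nonzero:
  assumes gen: "generic V d p" and "finite V"
    and cs: "distinct (c # cs)" "set (c # cs) \<subseteq> V" "length cs \<le> d"
  shows "Determinant.det (gram_mat d (length cs) (\<lambda>i k. p (cs ! i) k - p c k)) \<noteq> 0"
proof
  let ?I = "V \<times> {..<d}" and ?n = "length cs"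
  define F where "F z = Determinant.det (gram_mat d ?n (\<lambda>i k. z (cs ! i, k) - z (c, k)))"
    for z :: "'a \<times> nat \<Rightarrow> real"
  have "rat_polyfun ?I F"
    unfolding F_def gram_mat_def dotp_def using assms
    by (intro rat_polyfun_det rat_polyfun_sum rat_polyfun_mult rat_polyfun_diff rat_polyfun_var) auto
  moreover assume "Determinant.det (gram_mat d ?n (\<lambda>i k. p (cs ! i) k - p c k)) = 0"
  then have "F (\<lambda>(v, k). p v k) = 0"
    unfolding F_def by simp
  ultimately have F_zero: "F z = 0" for z
    using gen unfolding generic_def by (blast intro: alg_indep_Q_rat_polyfun_zero)
  \<comment> \<open>sends \<open>cs ! i\<close> to the \<open>i\<close>-th unit vector and \<open>c\<close> to the origin\<close>
  define z0 where "z0 = (\<lambda>(v, k). if k < ?n \<and> v = cs ! k then 1 else (0 :: real))"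
  have z0_base: "z0 (c, k) = 0" for k
    using cs(1) by (auto simp: z0_def)
  have z0_unit: "z0 (cs ! i, k) = (if k = i then 1 else 0)" if "i < ?n" for i k
    using cs(1) that by (auto simp: z0_def nth_eq_iff_index_eq)
  have "gram_mat d ?n (\<lambda>i k. z0 (cs ! i, k) - z0 (c, k)) = 1\<^sub>m ?n"
  proof (rule eq_matI)
    fix i j assume "i < dim_row (1\<^sub>m ?n :: real mat)" "j < dim_col (1\<^sub>m ?n :: real mat)"
    then have ij: "i < ?n" "j < ?n" by simp_all
    have "dotp d (\<lambda>k. z0 (cs ! i, k) - z0 (c, k)) (\<lambda>k. z0 (cs ! j, k) - z0 (c, k)) =
          (\<Sum>k<d. (if k = i then 1 else 0) * (if k = j then 1 else 0))"
      unfolding dotp_def using ij by (simp add: z0_base z0_unit)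
    also have "\<dots> = (if i = j then 1 else 0)"
      using ij cs(3) by (simp add: if_distrib[of "\<lambda>x. x * _"] cong: if_cong)
    finally show "gram_mat d ?n (\<lambda>i k. z0 (cs ! i, k) - z0 (c, k)) $$ (i, j) = 1\<^sub>m ?n $$ (i, j)"
      using ij by (simp add: gram_mat_def)
  qed (simp_all add: gram_mat_def)
  then have "F z0 = 1"
    unfolding F_def by simp
  with F_zero show False by simp
qed

definition motion :: "'a set \<Rightarrow> nat \<Rightarrow> ('a \<Rightarrow> nat \<Rightarrow> real) \<Rightarrow> (real \<Rightarrow> 'a \<Rightarrow> nat \<Rightarrow> real) \<Rightarrow> bool" where
  "motion V d p x \<longleftrightarrow>
     (\<forall>v\<in>V. \<forall>k<d. continuous_on {0..1} (\<lambda>t. x t v k)) \<and> (\<forall>v\<in>V. \<forall>k<d. x 0 v k = p v k)"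

definition keeps_distances_on ::
    "nat \<Rightarrow> ('a \<Rightarrow> nat \<Rightarrow> real) \<Rightarrow> (real \<Rightarrow> 'a \<Rightarrow> nat \<Rightarrow> real) \<Rightarrow> 'a set \<Rightarrow> bool" where
  "keeps_distances_on d p x S \<longleftrightarrow> (\<forall>t\<in>{0..1}. \<forall>a\<in>S. \<forall>b\<in>S. sqdist d (x t) a b = sqdist d p a b)"

lemma keeps_distances_on_subset:
  "keeps_distances_on d p x S \<Longrightarrow> T \<subseteq> S \<Longrightarrow> keeps_distances_on d p x T"
  unfolding keeps_distances_on_def by blast

lemma keeps_distances_on_dotp:
  assumes "keeps_distances_on d p x S" "t \<in> {0..1}" "a \<in> S" "b \<in> S" "c \<in> S"
  shows "dotp d (\<lambda>k. x t a k - x t c k) (\<lambda>k. x t b k - x t c k) =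
         dotp d (\<lambda>k. p a k - p c k) (\<lambda>k. p b k - p c k)"
  using assms unfolding keeps_distances_on_def dotp_diff_polarization by simp

lemma keeps_distances_on_if_adjacent_or_kept:
  assumes "\<forall>t\<in>{0..1}. \<forall>a b. {a, b} \<in> E \<longrightarrow> sqdist d (x t) a b = sqdist d p a b"
    and "keeps_distances_on d p x T"
    and "\<forall>a\<in>S. \<forall>b\<in>S. a \<noteq> b \<longrightarrow> {a, b} \<in> E \<or> a \<in> T \<and> b \<in> T"
  shows "keeps_distances_on d p x S"
  using assms sqdist_self unfolding keeps_distances_on_def by metis

lemma motion_keeps_sqdist_if_finitely_many_values:
  assumes x: "motion V d p x" and "a \<in> V" "b \<in> V"
    and "finite ((\<lambda>t. sqdist d (x t) a b) ` {0..1})"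
  shows "\<forall>t\<in>{0..1}. sqdist d (x t) a b = sqdist d p a b"
proof -
  have "continuous_on {0..1} (\<lambda>t. sqdist d (x t) a b)"
    using x assms(2,3) unfolding motion_def sqdist_def by (intro continuous_intros) auto
  then have "(\<lambda>t. sqdist d (x t) a b) constant_on {0..1}"
    using assms(4) by (rule continuous_finite_range_constant[OF connected_Icc])
  moreover have "sqdist d (x 0) a b = sqdist d p a b"
    using x assms(2,3) unfolding motion_def sqdist_def by simp
  ultimately show ?thesis
    unfolding constant_on_def by force
qed

lemma keeps_distances_on_same_gram_except_pair:
  assumes "keeps_distances_on d p x (insert a K)" "keeps_distances_on d p x (insert b K)"
    and "t \<in> {0..1}" "set (c # cs) \<subseteq> K"
  shows "same_gram_except_pair d (length cs)
    (\<lambda>i k. x t (cs ! i) k - x t c k) (\<lambda>k. x t a k - x t c k) (\<lambda>k. x t b k - x t c k)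
    (\<lambda>i k. p (cs ! i) k - p c k) (\<lambda>k. p a k - p c k) (\<lambda>k. p b k - p c k)"
  unfolding same_gram_except_pair_def
  using keeps_distances_on_dotp[OF assms(1,3)] keeps_distances_on_dotp[OF assms(2,3)] assms(4)
  by (auto simp: subset_iff)

lemma finite_sqdist_values_across_generic_base:
  assumes gen: "generic V d p" and "finite V" and K: "K \<subseteq> V" "card K = d" "0 < d"
    and keep_a: "keeps_distances_on d p x (insert a K)"
    and keep_b: "keeps_distances_on d p x (insert b K)"
  shows "finite ((\<lambda>t. sqdist d (x t) a b) ` {0..1})"
proof -
  have "finite K" "K \<noteq> {}"
    using K by (auto intro: card_ge_0_finite)
  then obtain c cs where cs: "distinct (c # cs)" "set (c # cs) = K"
    by (metis finite_distinct_list list.exhaust list.set(1))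
  then have d: "d = Suc (length cs)" and "c \<in> K"
    using K(2) distinct_card by fastforce+
  have "Determinant.det (gram_mat d (length cs) (\<lambda>i k. p (cs ! i) k - p c k)) \<noteq> 0"
    using generic_gram_det_nonzero[OF gen \<open>finite V\<close> cs(1)] cs(2) K d by auto
  then obtain m P where quadratic: "\<And>v Y C. same_gram_except_pair d (length cs) v Y C
      (\<lambda>i k. p (cs ! i) k - p c k) (\<lambda>k. p a k - p c k) (\<lambda>k. p b k - p c k) \<Longrightarrow>
      (dotp d Y C - m)\<^sup>2 = P"
    using dotp_quadratic_relation_if_same_gram_except_pair[where n = "length cs"
        and X = "\<lambda>k. p a k - p c k" and Z = "\<lambda>k. p b k - p c k"]
    unfolding d by blast
  define f where "f s = sqdist d p a c + sqdist d p b c - 2 * s" for s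
  have "sqdist d (x t) a b \<in> f ` {m + sqrt P, m - sqrt P}" if t: "t \<in> {0..1}" for t
  proof -
    have "sqdist d (x t) a b = f (dotp d (\<lambda>k. x t a k - x t c k) (\<lambda>k. x t b k - x t c k))"
      using keep_a keep_b t \<open>c \<in> K\<close>
      unfolding f_def dotp_diff_polarization keeps_distances_on_def by (simp add: field_simps)
    moreover have "same_gram_except_pair d (length cs)
        (\<lambda>i k. x t (cs ! i) k - x t c k) (\<lambda>k. x t a k - x t c k) (\<lambda>k. x t b k - x t c k)
        (\<lambda>i k. p (cs ! i) k - p c k) (\<lambda>k. p a k - p c k) (\<lambda>k. p b k - p c k)"
      using cs(2) by (intro keeps_distances_on_same_gram_except_pair[OF keep_a keep_b t]) simp
    then have "(dotp d (\<lambda>k. x t a k - x t c k) (\<lambda>k. x t b k - x t c k) - m)\<^sup>2 = P"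
      by (rule quadratic)
    then have "dotp d (\<lambda>k. x t a k - x t c k) (\<lambda>k. x t b k - x t c k) \<in> {m + sqrt P, m - sqrt P}"
      by (rule mem_plus_minus_sqrt_if_power2_eq)
    ultimately show ?thesis
      by (simp only: image_eqI)
  qed
  then have "(\<lambda>t. sqdist d (x t) a b) ` {0..1} \<subseteq> f ` {m + sqrt P, m - sqrt P}"
    by (rule image_subsetI)
  then show ?thesis
    by (rule finite_subset) simp
qed

lemma keeps_sqdist_across_generic_base:
  assumes "generic V d p" "finite V" and x: "motion V d p x"
    and "K \<subseteq> V" "card K = d" and ab: "a \<in> V" "b \<in> V"
    and "keeps_distances_on d p x (insert a K)" "keeps_distances_on d p x (insert b K)"
  shows "\<forall>t\<in>{0..1}. sqdist d (x t) a b = sqdist d p a b"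
proof (cases "d = 0")
  case True
  then show ?thesis by (simp add: sqdist_def)
next
  case False
  with assms have "finite ((\<lambda>t. sqdist d (x t) a b) ` {0..1})"
    by (intro finite_sqdist_values_across_generic_base) auto
  then show ?thesis
    by (rule motion_keeps_sqdist_if_finitely_many_values[OF x ab])
qed

lemma keeps_distances_on_if_kept_with_base:
  assumes "generic V d p" "finite V" "motion V d p x"
    and S: "S \<subseteq> V" and "K \<subseteq> V" "card K = d"
    and keep: "\<forall>a\<in>S. keeps_distances_on d p x (insert a K)"
  shows "keeps_distances_on d p x S"
  unfolding keeps_distances_on_def
proof (intro ballI)
  fix t :: real and a b assume "t \<in> {0..1}" "a \<in> S" "b \<in> S"
  with S keep keeps_sqdist_across_generic_base[OF assms(1-3,5,6)]
  show "sqdist d (x t) a b = sqdist d p a b"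
    by (meson subsetD)
qed

lemma keeps_distances_on_Un:
  assumes "generic V d p" "finite V" "motion V d p x"
    and "A \<subseteq> V" "B \<subseteq> V" "d \<le> card (A \<inter> B)"
    and A: "keeps_distances_on d p x A" and B: "keeps_distances_on d p x B"
  shows "keeps_distances_on d p x (A \<union> B)"
proof -
  obtain K where K: "K \<subseteq> A \<inter> B" "card K = d"
    using assms(6) obtain_subset_with_card_n by metis
  have "keeps_distances_on d p x (insert y K)" if "y \<in> A \<union> B" for y
  proof (cases "y \<in> A")
    case True
    with K(1) have "insert y K \<subseteq> A" by blast
    with A show ?thesis by (rule keeps_distances_on_subset)
  next
    case False
    with that K(1) have "insert y K \<subseteq> B" by blast
    with B show ?thesis by (rule keeps_distances_on_subset)
  qed
  moreover have "A \<union> B \<subseteq> V" "K \<subseteq> V"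
    using assms(4,5) K(1) by auto
  ultimately show ?thesis
    using keeps_distances_on_if_kept_with_base[OF assms(1-3)] K(2) by blast
qed

definition neighbours :: "'a set \<Rightarrow> 'a set set \<Rightarrow> 'a \<Rightarrow> 'a set" where
  "neighbours V E v = {u \<in> V. {u, v} \<in> E}"

definition clique :: "'a set set \<Rightarrow> 'a set \<Rightarrow> bool" where
  "clique E S \<longleftrightarrow> (\<forall>a\<in>S. \<forall>b\<in>S. a \<noteq> b \<longrightarrow> {a, b} \<in> E)"

lemma degree_eq_card_neighbours: "degree V E v = card (neighbours V E v)"
  unfolding degree_def neighbours_def ..

lemma simple_graph_no_loop: "simple_graph V E \<Longrightarrow> {v, v} \<notin> E"
  unfolding simple_graph_def by (metis doubleton_eq_iff)

lemma neighbours_subset: "simple_graph V E \<Longrightarrow> neighbours V E v \<subseteq> V - {v}"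
  using simple_graph_no_loop unfolding neighbours_def by fastforce

lemma clique_insert_if_adjacent_to_all:
  assumes "K \<subseteq> W" "a \<in> W" and adj: "\<forall>k\<in>K. \<forall>w\<in>W. w \<noteq> k \<longrightarrow> {w, k} \<in> E"
  shows "clique E (insert a K)"
  unfolding clique_def
proof (intro ballI impI)
  fix b c assume b: "b \<in> insert a K" and c: "c \<in> insert a K" and "b \<noteq> c"
  then have "b \<in> W" "c \<in> W"
    using assms(1,2) by auto
  show "{b, c} \<in> E"
  proof (cases "b \<in> K")
    case True
    then have "{c, b} \<in> E"
      using adj \<open>c \<in> W\<close> \<open>b \<noteq> c\<close> by simp
    then show ?thesis
      by (simp add: insert_commute)
  next
    case False
    then have "c \<in> K"
      using b c \<open>b \<noteq> c\<close> by simp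
    then show ?thesis
      using adj \<open>b \<in> W\<close> \<open>b \<noteq> c\<close> by simp
  qed
qed

lemma neighbours_of_nonneighbour:
  assumes G: "simple_graph V E"
    and ore: "\<forall>u\<in>V. \<forall>v\<in>V. u \<noteq> v \<and> {u, v} \<notin> E \<longrightarrow> degree V E u + degree V E v \<ge> card V + d - 2"
    and u: "u \<in> V" "degree V E u = d" and v: "v \<in> V" "v \<noteq> u" "{u, v} \<notin> E"
  shows "neighbours V E v = V - {u, v}"
proof (rule card_subset_eq)
  show fin: "finite (V - {u, v})"
    using G by (simp add: simple_graph_def)
  show sub: "neighbours V E v \<subseteq> V - {u, v}"
    using neighbours_subset[OF G, of v] v(3) by (auto simp: neighbours_def insert_commute)
  have "card (V - {u, v}) = card V - 2"
    using u(1) v(1,2) G by (simp add: card_Diff_subset simple_graph_def)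
  also have "\<dots> \<le> card (neighbours V E v)"
    using ore u v by (force simp: degree_eq_card_neighbours)
  finally show "card (neighbours V E v) = card (V - {u, v})"
    using card_mono[OF fin sub] by simp
qed

lemma min_degree_vertex_with_clique_base:
  assumes G: "simple_graph V E" and "card V \<ge> 2 * d + 1" and "min_degree V E = d"
    and ore: "\<forall>u\<in>V. \<forall>v\<in>V. u \<noteq> v \<and> {u, v} \<notin> E \<longrightarrow> degree V E u + degree V E v \<ge> card V + d - 2"
  shows "\<exists>u K. u \<in> V \<and> card (neighbours V E u) = d \<and> K \<subseteq> V - {u} \<and> card K = d \<and>
           (\<forall>a\<in>V - {u}. clique E (insert a K))"
proof -
  have "finite V" "V \<noteq> {}"
    using G assms(2) by (auto simp: simple_graph_def)
  then have "min_degree V E \<in> degree V E ` V"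
    unfolding min_degree_def by (intro Min_in) auto
  then obtain u where u: "u \<in> V" "degree V E u = d"
    using assms(3) by auto
  define B where "B = V - insert u (neighbours V E u)"
  have "card (insert u (neighbours V E u)) = Suc d"
    using neighbours_subset[OF G, of u] u \<open>finite V\<close>
    by (subst card_insert_disjoint) (auto intro: finite_subset simp: degree_eq_card_neighbours)
  then have "card B = card V - Suc d"
    unfolding B_def using neighbours_subset[OF G, of u] u(1) \<open>finite V\<close>
    by (subst card_Diff_subset) (auto intro: finite_subset)
  then have "d \<le> card B"
    using assms(2) by simp
  then obtain K where K: "K \<subseteq> B" "card K = d"
    by (meson obtain_subset_with_card_n)
  have adj: "\<forall>k\<in>K. \<forall>w\<in>V - {u}. w \<noteq> k \<longrightarrow> {w, k} \<in> E"
  proof (intro ballI impI)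
    fix k w assume "k \<in> K" "w \<in> V - {u}" "w \<noteq> k"
    have "k \<in> V" "k \<noteq> u" "{u, k} \<notin> E"
      using \<open>k \<in> K\<close> K(1) by (auto simp: B_def neighbours_def insert_commute)
    then have "neighbours V E k = V - {u, k}"
      by (rule neighbours_of_nonneighbour[OF G ore u])
    with \<open>w \<in> V - {u}\<close> \<open>w \<noteq> k\<close> show "{w, k} \<in> E"
      by (auto simp: neighbours_def)
  qed
  have "K \<subseteq> V - {u}"
    using K(1) by (auto simp: B_def)
  then have "clique E (insert a K)" if "a \<in> V - {u}" for a
    using that adj by (rule clique_insert_if_adjacent_to_all)
  with u K(2) \<open>K \<subseteq> V - {u}\<close> show ?thesis
    unfolding degree_eq_card_neighbours by blast
qed

lemma keeps_distances_on_clique: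
  assumes "\<forall>t\<in>{0..1}. \<forall>a b. {a, b} \<in> E \<longrightarrow> sqdist d (x t) a b = sqdist d p a b"
    and "clique E S"
  shows "keeps_distances_on d p x S"
proof (rule keeps_distances_on_if_adjacent_or_kept[OF assms(1)])
  show "keeps_distances_on d p x {}"
    by (simp add: keeps_distances_on_def)
  show "\<forall>a\<in>S. \<forall>b\<in>S. a \<noteq> b \<longrightarrow> {a, b} \<in> E \<or> a \<in> {} \<and> b \<in> {}"
    using assms(2) unfolding clique_def by blast
qed

lemma keeps_distances_on_insert_neighbours:
  assumes "\<forall>t\<in>{0..1}. \<forall>a b. {a, b} \<in> E \<longrightarrow> sqdist d (x t) a b = sqdist d p a b"
    and "keeps_distances_on d p x (neighbours V E u)"
  shows "keeps_distances_on d p x (insert u (neighbours V E u))"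
proof (rule keeps_distances_on_if_adjacent_or_kept[OF assms])
  let ?N = "neighbours V E u"
  show "\<forall>a\<in>insert u ?N. \<forall>b\<in>insert u ?N. a \<noteq> b \<longrightarrow> {a, b} \<in> E \<or> a \<in> ?N \<and> b \<in> ?N"
  proof (intro ballI impI)
    fix a b assume "a \<in> insert u ?N" "b \<in> insert u ?N" "a \<noteq> b"
    then consider "a = u" "b \<in> ?N" | "b = u" "a \<in> ?N" | "a \<in> ?N" "b \<in> ?N"
      by blast
    then show "{a, b} \<in> E \<or> a \<in> ?N \<and> b \<in> ?N"
      by cases (auto simp: neighbours_def insert_commute)
  qed
qed

theorem lemma4p2:
  fixes V :: "'a set" and E :: "'a set set" and d :: nat
  assumes "simple_graph V E"
    and "card V \<ge> 2 * d + 1"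
    and "min_degree V E = d"
    and "\<forall>u\<in>V. \<forall>v\<in>V. u \<noteq> v \<and> {u, v} \<notin> E \<longrightarrow>
           degree V E u + degree V E v \<ge> card V + d - 2"
  shows "rigid V E d"
proof -
  obtain u K where u: "u \<in> V" "card (neighbours V E u) = d" and K: "K \<subseteq> V - {u}" "card K = d"
    and cliques: "\<forall>a\<in>V - {u}. clique E (insert a K)"
    using min_degree_vertex_with_clique_base[OF assms] by blast
  let ?N = "neighbours V E u"
  have finV: "finite V"
    using assms(1) by (simp add: simple_graph_def)
  have N: "?N \<subseteq> V - {u}"
    using assms(1) by (rule neighbours_subset)
  show ?thesis
    unfolding rigid_def
  proof (intro allI impI notI)
    fix p assume gen: "generic V d p" and "flexible V E d p"
    then obtain x where x: "motion V d p x"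
      and edges: "\<forall>t\<in>{0..1}. \<forall>a b. {a, b} \<in> E \<longrightarrow> sqdist d (x t) a b = sqdist d p a b"
      and moved: "\<exists>t\<in>{0..1}. \<exists>a\<in>V. \<exists>b\<in>V. sqdist d (x t) a b \<noteq> sqdist d p a b"
      unfolding flexible_def motion_def by blast
    have "keeps_distances_on d p x (V - {u})"
      using cliques K(1) keeps_distances_on_clique[OF edges]
      by (intro keeps_distances_on_if_kept_with_base[OF gen finV x _ _ K(2)]) auto
    moreover have "keeps_distances_on d p x (insert u ?N)"
      using keeps_distances_on_subset[OF calculation N]
      by (rule keeps_distances_on_insert_neighbours[OF edges])
    moreover have "(V - {u}) \<inter> insert u ?N = ?N" "(V - {u}) \<union> insert u ?N = V"
      using u(1) N by blast+
    ultimately have "keeps_distances_on d p x V"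
      using keeps_distances_on_Un[OF gen finV x, of "V - {u}" "insert u ?N"] N u by auto
    with moved show False
      unfolding keeps_distances_on_def by blast
  qed
qed

end
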